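(* Let $\mathbf{C}=\mathbf{C}_1\,\dot\cup\,\mathbf{C}_2$ and $\mathbf{B}=\mathbf{B}_+\,\dot\cup\,\mathbf{B}'\in\dot{\mathbb{P}}(\mathbb{L}(\mathbf{C}_1))$ with $|\mathbf{B}|=|\mathbf{C}_1|$. Suppose every literal in $\mathbf{B}_+$ and every variable in $\mathbf{C}_2$ has a positive monotonic effect on $D$ relative to $\mathbf{C}$, and $\mathbf{W}$ suffices to adjust for confounding of $\mathbf{C}$ on $D$. If for some $\mathbf{w}$ and some tree $\mathfrak{T}$ on $\mathbf{B}_+$ (all conditioning events having positive probability) $$E[D\mid\mathbf{B}=\mathbf{1},\mathbf{C}_2=\mathbf{0},\mathbf{W}=\mathbf{w}]-\sum_{L\in\mathbf{B}}E[D\mid\mathbf{B}\setminus\{L\}=\mathbf{1},L=0,\mathbf{C}_2=\mathbf{0},\mathbf{W}=\mathbf{w}]+\sum_{\mathbf{E}\in\mathfrak{T}}E[D\mid\mathbf{B}\setminus\mathbf{E}=\mathbf{1},\mathbf{E}=\mathbf{0},\mathbf{C}_2=\mathbf{0},\mathbf{W}=\mathbf{w}]>0,$$ then $\mathbf{B}$ is a minimal sufficient cause of $D$ relative to $\mathbf{C}$ for some $\omega\in\Omega$.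
   Context: $\Omega$ is a population with a probability distribution; events are binary random variables; $\overline{X}=1-X$; $\mathbb{L}(\mathbf{C})=\mathbf{C}\cup\{\overline{X}:X\in\mathbf{C}\}$; $\dot{\mathbb{P}}(\mathbb{L}(\mathbf{C}))$ is the set of subsets of $\mathbb{L}(\mathbf{C})$ not containing both $X$ and $\overline{X}$; $(L)_{\mathbf{c}}$ is the value of literal $L$ under assignment $\mathbf{c}$; $\bigwedge(\mathbf{B})=\min_{L\in\mathbf{B}}L$. Potential outcomes $D_{\mathbf{c}}(\omega)\in\{0,1\}$; consistency $D(\omega)=D_{\mathbf{C}(\omega)}(\omega)$. Conditioning events such as $\{\mathbf{B}\setminus\mathbf{E}=\mathbf{1},\mathbf{E}=\mathbf{0}\}$ mean the literals in $\mathbf{E}$ are 0 and the other literals of $\mathbf{B}$ are 1. $\mathbf{W}$ suffices to adjust for confounding of $\mathbf{C}$ on $D$ if $D_{\mathbf{c}}$ is independent of $\mathbf{C}$ given $\mathbf{W}=\mathbf{w}$ for all $\mathbf{c},\mathbf{w}$. A literal $L$ (or variable, viewed as the literal $X$) has a positive monotonic effect on $D$ relative to $\mathbf{C}$ if for all $\omega$ and all assignments $\mathbf{c},\mathbf{c}'$ differing only in the variable underlying $L$ with $(L)_{\mathbf{c}}=1,(L)_{\mathbf{c}'}=0$, $D_{\mathbf{c}}(\omega)\ge D_{\mathbf{c}'}(\omega)$. A tree on a finite set $\mathbf{S}$ is a set $\mathfrak{T}$ of 2-element subsets of $\mathbf{S}$ with $|\mathfrak{T}|=|\mathbf{S}|-1$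 connecting all elements (empty if $|\mathbf{S}|\le1$). $\mathbf{B}$ is a sufficient cause for $D$ relative to $\mathbf{C}$ for $\omega$ if some $\mathbf{c}^*$ has $(\bigwedge(\mathbf{B}))_{\mathbf{c}^*}=1$ and $D_{\mathbf{c}}(\omega)=1$ whenever $(\bigwedge(\mathbf{B}))_{\mathbf{c}}=1$; minimal if no proper subset is such a sufficient cause. *)

theory Defs
  imports "HOL-Probability.Probability"
begin

datatype 'v lit = Pos 'v | Neg 'v

fun var :: "'v lit \<Rightarrow> 'v" where
  "var (Pos X) = X" | "var (Neg X) = X"

fun lval :: "'v lit \<Rightarrow> ('v \<Rightarrow> bool) \<Rightarrow> bool" where
  "lval (Pos X) c = c X" | "lval (Neg X) c = (\<not> c X)"

definition Lits :: "'v set \<Rightarrow> 'v lit set" where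
  "Lits C = Pos ` C \<union> Neg ` C"

definition consistent_lits :: "'v lit set \<Rightarrow> bool" where
  "consistent_lits B = (\<forall>X. \<not> (Pos X \<in> B \<and> Neg X \<in> B))"

text \<open>Assignments c of the variables in C (canonically False outside C).\<close>
definition assignments :: "'v set \<Rightarrow> ('v \<Rightarrow> bool) set" where
  "assignments C = {c. \<forall>X. X \<notin> C \<longrightarrow> c X = False}"

definition obs_asg :: "'v set \<Rightarrow> ('v \<Rightarrow> 'o \<Rightarrow> bool) \<Rightarrow> 'o \<Rightarrow> ('v \<Rightarrow> bool)" where
  "obs_asg C val \<omega> = (\<lambda>X. if X \<in> C then val X \<omega> else False)"

definition pos_monotonic ::
  "'v set \<Rightarrow> (('v \<Rightarrow> bool) \<Rightarrow> 'o \<Rightarrow> bool) \<Rightarrow> 'v lit \<Rightarrow> bool" where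
  "pos_monotonic C Dpo L =
     (\<forall>\<omega> c c'. c \<in> assignments C \<longrightarrow> c' \<in> assignments C \<longrightarrow>
        (\<forall>Y. Y \<noteq> var L \<longrightarrow> c Y = c' Y) \<longrightarrow> lval L c \<longrightarrow> \<not> lval L c' \<longrightarrow>
        (Dpo c' \<omega> \<longrightarrow> Dpo c \<omega>))"

text \<open>W suffices to adjust for confounding of C on D: D_c is independent of C
  given W = w, for all c and w (product form of conditional independence).\<close>
definition suff_adjust ::
  "'o pmf \<Rightarrow> 'v set \<Rightarrow> ('v \<Rightarrow> 'o \<Rightarrow> bool) \<Rightarrow> ('o \<Rightarrow> 'w) \<Rightarrow> (('v \<Rightarrow> bool) \<Rightarrow> 'o \<Rightarrow> bool) \<Rightarrow> bool" where
  "suff_adjust p C val W Dpo =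
     (\<forall>c \<in> assignments C. \<forall>w a d.
        measure_pmf.prob p {\<omega>. Dpo c \<omega> = d \<and> obs_asg C val \<omega> = a \<and> W \<omega> = w}
          * measure_pmf.prob p {\<omega>. W \<omega> = w}
        = measure_pmf.prob p {\<omega>. Dpo c \<omega> = d \<and> W \<omega> = w}
          * measure_pmf.prob p {\<omega>. obs_asg C val \<omega> = a \<and> W \<omega> = w})"

definition is_tree :: "'a set \<Rightarrow> 'a set set \<Rightarrow> bool" where
  "is_tree S T =
     (T \<subseteq> {e. \<exists>a b. a \<in> S \<and> b \<in> S \<and> a \<noteq> b \<and> e = {a, b}} \<and>
      card T = card S - 1 \<and>
      (\<forall>x\<in>S. \<forall>y\<in>S. (x, y) \<in> {(a, b). {a, b} \<in> T}\<^sup>*))"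

definition sufficient_cause ::
  "'v set \<Rightarrow> (('v \<Rightarrow> bool) \<Rightarrow> 'o \<Rightarrow> bool) \<Rightarrow> 'v lit set \<Rightarrow> 'o \<Rightarrow> bool" where
  "sufficient_cause C Dpo B \<omega> =
     ((\<exists>c \<in> assignments C. \<forall>L\<in>B. lval L c) \<and>
      (\<forall>c \<in> assignments C. (\<forall>L\<in>B. lval L c) \<longrightarrow> Dpo c \<omega>))"

definition minimal_sufficient_cause ::
  "'v set \<Rightarrow> (('v \<Rightarrow> bool) \<Rightarrow> 'o \<Rightarrow> bool) \<Rightarrow> 'v lit set \<Rightarrow> 'o \<Rightarrow> bool" where
  "minimal_sufficient_cause C Dpo B \<omega> =
     (sufficient_cause C Dpo B \<omega> \<and> (\<forall>B0. B0 \<subset> B \<longrightarrow> \<not> sufficient_cause C Dpo B0 \<omega>))"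

definition cond_event ::
  "('v \<Rightarrow> 'o \<Rightarrow> bool) \<Rightarrow> 'v lit set \<Rightarrow> 'v lit set \<Rightarrow> 'v set \<Rightarrow> ('o \<Rightarrow> 'w) \<Rightarrow> 'w \<Rightarrow> 'o set" where
  "cond_event val B E C2 W w =
     {\<omega>. (\<forall>L \<in> B - E. lval L (\<lambda>X. val X \<omega>)) \<and> (\<forall>L \<in> E. \<not> lval L (\<lambda>X. val X \<omega>)) \<and>
          (\<forall>X \<in> C2. \<not> val X \<omega>) \<and> W \<omega> = w}"

definition cexp :: "'o pmf \<Rightarrow> ('o \<Rightarrow> bool) \<Rightarrow> 'o set \<Rightarrow> real" where
  "cexp p D A = measure_pmf.prob p {\<omega> \<in> A. D \<omega>} / measure_pmf.prob p A"

end

theory Submission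
  imports Defs
begin

text \<open>
  For a set \<open>E\<close> of literals of \<open>B\<close> let \<open>c\<^sub>E\<close> be the assignment making the literals of
  \<open>B - E\<close> true, those of \<open>E\<close> false, and every variable of \<open>C\<^sub>2\<close> false. As \<open>W\<close> adjusts for
  confounding, the conditional expectation given \<open>B - E = 1, E = 0, C\<^sub>2 = 0, W = w\<close> equals
  \<open>P(D\<^bsub>c\<^sub>E\<^esub> = 1 | W = w)\<close>. Hence the hypothesis says that the individual contrast
  \<open>D\<^bsub>c\<^sub>{}\<^esub> - \<Sum>\<^bsub>L\<in>B\<^esub> D\<^bsub>c\<^sub>{L}\<^esub> + \<Sum>\<^bsub>E\<in>T\<^esub> D\<^bsub>c\<^sub>E\<^esub>\<close> has positive mean on \<open>W = w\<close>, so it is positive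
  for some individual \<open>\<omega>\<close>. Monotonicity of the literals of \<open>B\<^sub>+\<close> gives
  \<open>D\<^bsub>c\<^sub>{a,b}\<^esub>(\<omega>) \<le> D\<^bsub>c\<^sub>{a}\<^esub>(\<omega>)\<close> on every edge, and a tree has fewer than \<open>|S|\<close> edges inside any
  nonempty set \<open>S\<close> of vertices; so a positive contrast forces \<open>D\<^bsub>c\<^sub>{}\<^esub>(\<omega>) = 1\<close> and
  \<open>D\<^bsub>c\<^sub>{L}\<^esub>(\<omega>) = 0\<close> for every \<open>L \<in> B\<close>. The first equation together with monotonicity in
  \<open>C\<^sub>2\<close> makes \<open>B\<close> sufficient for \<open>\<omega>\<close>; the second makes every proper subset of \<open>B\<close>
  insufficient.
\<close>

definition contrast :: "('a set \<Rightarrow> real) \<Rightarrow> 'a set \<Rightarrow> 'a set set \<Rightarrow> real" where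
  "contrast f B T = f {} - (\<Sum>L\<in>B. f {L}) + (\<Sum>E\<in>T. f E)"

lemma contrast_cong:
  assumes "f {} = g {}" "\<And>L. L \<in> B \<Longrightarrow> f {L} = g {L}" "\<And>E. E \<in> T \<Longrightarrow> f E = g E"
  shows "contrast f B T = contrast g B T"
  unfolding contrast_def using assms by (simp cong: sum.cong)

lemma contrast_mult_right: "contrast (\<lambda>E. f E * a) B T = contrast f B T * a"
  unfolding contrast_def by (simp add: left_diff_distrib distrib_right sum_distrib_right)

lemma contrast_prob_eq_expectation:
  assumes "finite B" "finite T"
  shows "contrast (\<lambda>E. measure_pmf.prob p (A E)) B T
       = measure_pmf.expectation p (\<lambda>\<omega>. contrast (\<lambda>E. indicator (A E) \<omega>) B T)"
proof -
  have "integrable (measure_pmf p) (indicator X :: _ \<Rightarrow> real)" for X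
    by (intro integrable_real_indicator) (auto simp: measure_pmf.emeasure_finite less_top[symmetric])
  then show ?thesis
    unfolding contrast_def by (simp add: integral_sum integrable_sum)
qed

lemma measure_pmf_expectation_pos_imp:
  fixes g :: "'a \<Rightarrow> real"
  assumes "0 < measure_pmf.expectation p g"
  obtains \<omega> where "\<omega> \<in> set_pmf p" "0 < g \<omega>"
proof -
  have "\<not> (\<forall>\<omega>\<in>set_pmf p. g \<omega> \<le> 0)"
  proof
    assume "\<forall>\<omega>\<in>set_pmf p. g \<omega> \<le> 0"
    then have "0 \<le> measure_pmf.expectation p (\<lambda>\<omega>. - g \<omega>)"
      by (intro integral_nonneg_AE AE_pmfI) auto
    then show False using assms by simp
  qed
  then show thesis using that by (auto simp: not_le)
qed

lemma cexp_adjustment: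
  assumes "suff_adjust p C val W Dpo" "c \<in> assignments C"
    and consistency: "\<forall>\<omega>. D \<omega> = Dpo (obs_asg C val \<omega>) \<omega>"
    and pos: "0 < measure_pmf.prob p {\<omega>. obs_asg C val \<omega> = c \<and> W \<omega> = w}"
  shows "cexp p D {\<omega>. obs_asg C val \<omega> = c \<and> W \<omega> = w}
       = measure_pmf.prob p {\<omega>. Dpo c \<omega> \<and> W \<omega> = w} / measure_pmf.prob p {\<omega>. W \<omega> = w}"
proof -
  let ?Q = "{\<omega>. obs_asg C val \<omega> = c \<and> W \<omega> = w}"
  have num: "{\<omega> \<in> ?Q. D \<omega>} = {\<omega>. Dpo c \<omega> = True \<and> obs_asg C val \<omega> = c \<and> W \<omega> = w}"
    using consistency by auto
  have adjust: "measure_pmf.prob p {\<omega>. Dpo c \<omega> = True \<and> obs_asg C val \<omega> = c \<and> W \<omega> = w}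
        * measure_pmf.prob p {\<omega>. W \<omega> = w}
      = measure_pmf.prob p {\<omega>. Dpo c \<omega> = True \<and> W \<omega> = w} * measure_pmf.prob p ?Q"
    using assms(1,2) unfolding suff_adjust_def by blast
  have "measure_pmf.prob p ?Q \<le> measure_pmf.prob p {\<omega>. W \<omega> = w}"
    by (rule measure_pmf.finite_measure_mono) auto
  then show ?thesis
    using adjust pos unfolding cexp_def num by (simp add: field_simps)
qed

lemma is_tree_edgeD:
  assumes "is_tree V T" "e \<in> T"
  shows "\<exists>a b. a \<in> V \<and> b \<in> V \<and> a \<noteq> b \<and> e = {a, b}"
  using assms unfolding is_tree_def by auto

lemma is_tree_finite:
  assumes "is_tree V T" "finite V"
  shows "finite T"
proof -
  have "T \<subseteq> Pow V" using is_tree_edgeD[OF assms(1)] by blast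
  then show ?thesis using assms(2) finite_subset by blast
qed

lemma rtrancl_edges_crossing:
  assumes "(v, r) \<in> {(a, b). {a, b} \<in> T}\<^sup>*" "v \<notin> S" "r \<in> S"
  shows "\<exists>x y. {x, y} \<in> T \<and> x \<notin> S \<and> y \<in> S"
  using assms
proof (induction rule: rtrancl_induct)
  case (step y z)
  then show ?case by (cases "y \<in> S") auto
qed simp

text \<open>Each vertex outside \<open>S\<close> can be charged to a distinct edge leaving \<open>S\<close>: adding the
  outer endpoint of one crossing edge to \<open>S\<close> removes that edge from the crossing ones.\<close>

lemma card_diff_le_card_crossing_edges:
  assumes "finite V" "S \<subseteq> V" "finite T" "\<forall>e\<in>T. e \<subseteq> V"
    "\<forall>v\<in>V. \<exists>r\<in>S. (v, r) \<in> {(a, b). {a, b} \<in> T}\<^sup>*"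
  shows "card (V - S) \<le> card {e\<in>T. \<not> e \<subseteq> S}"
  using assms
proof (induction "card (V - S)" arbitrary: S)
  case (Suc n)
  then obtain v where v: "v \<in> V" "v \<notin> S"
    by (metis Diff_iff card_0_eq finite_Diff nat.distinct(1) subsetI subset_empty)
  then obtain r where "r \<in> S" "(v, r) \<in> {(a, b). {a, b} \<in> T}\<^sup>*" using Suc.prems by blast
  then obtain x y where xy: "{x, y} \<in> T" "x \<notin> S" "y \<in> S" using rtrancl_edges_crossing v by metis
  have "x \<in> V" using xy Suc.prems(4) by blast
  have n: "n = card (V - insert x S)"
    using Suc.hyps(2) \<open>x \<in> V\<close> xy(2) Suc.prems(1)
    by (metis Diff_insert card_Diff_singleton diff_Suc_1 finite_Diff DiffI)
  have "card (V - insert x S) \<le> card {e\<in>T. \<not> e \<subseteq> insert x S}"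
    using Suc.hyps(1)[OF n] Suc.prems \<open>x \<in> V\<close> by blast
  also have "\<dots> \<le> card ({e\<in>T. \<not> e \<subseteq> S} - {{x, y}})"
    using xy Suc.prems(3) by (intro card_mono) auto
  also have "\<dots> = card {e\<in>T. \<not> e \<subseteq> S} - 1"
    using xy Suc.prems(3) by (subst card_Diff_singleton) auto
  finally have "card (V - insert x S) \<le> card {e\<in>T. \<not> e \<subseteq> S} - 1" .
  moreover have "{x, y} \<in> {e\<in>T. \<not> e \<subseteq> S}" using xy by auto
  then have "card {e\<in>T. \<not> e \<subseteq> S} \<ge> 1"
    using Suc.prems(3) by (metis (no_types, lifting) One_nat_def Suc_leI card_gt_0_iff empty_iff finite_subset mem_Collect_eq subsetI)
  ultimately show ?case using n Suc.hyps(2) by linarith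
qed simp

lemma tree_card_edges_within_less:
  assumes "is_tree V T" "finite V" "S \<subseteq> V" "S \<noteq> {}"
  shows "card {e\<in>T. e \<subseteq> S} < card S"
proof -
  have Tsub: "\<forall>e\<in>T. e \<subseteq> V" and cT: "card T = card V - 1"
    and conn: "\<forall>x\<in>V. \<forall>y\<in>V. (x, y) \<in> {(a, b). {a, b} \<in> T}\<^sup>*"
    using assms(1) unfolding is_tree_def by auto
  have finT: "finite T" using is_tree_finite assms(1,2) .
  have finS: "finite S" using assms(2,3) finite_subset by blast
  obtain s where "s \<in> S" using assms(4) by blast
  then have "\<forall>v\<in>V. \<exists>r\<in>S. (v, r) \<in> {(a, b). {a, b} \<in> T}\<^sup>*"
    using conn assms(3) by blast
  then have "card (V - S) \<le> card {e\<in>T. \<not> e \<subseteq> S}"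
    by (rule card_diff_le_card_crossing_edges[OF assms(2,3) finT Tsub])
  moreover have "card T = card {e\<in>T. e \<subseteq> S} + card {e\<in>T. \<not> e \<subseteq> S}"
  proof -
    have "T = {e\<in>T. e \<subseteq> S} \<union> {e\<in>T. \<not> e \<subseteq> S}" by blast
    then show ?thesis using finT by (metis (no_types, lifting) card_Un_disjoint disjoint_iff
      finite_Un mem_Collect_eq)
  qed
  moreover have "card (V - S) = card V - card S" by (rule card_Diff_subset[OF finS assms(3)])
  moreover have "card S \<le> card V" by (rule card_mono[OF assms(2,3)])
  moreover have "0 < card S" using finS assms(4) by (simp add: card_gt_0_iff)
  ultimately show ?thesis using cT by linarith
qed

lemma contrast_of_bool_pos_on_tree:
  fixes d :: "'a set \<Rightarrow> bool"
  assumes "is_tree Bp T" "finite Bp" "finite Bq" "Bp \<inter> Bq = {}"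
    and edge_mono: "\<And>E a. E \<in> T \<Longrightarrow> d E \<Longrightarrow> a \<in> E \<Longrightarrow> d {a}"
    and pos: "0 < contrast (\<lambda>E. of_bool (d E)) (Bp \<union> Bq) T"
  shows "d {} \<and> (\<forall>L\<in>Bp \<union> Bq. \<not> d {L})"
proof -
  define S where "S = Bp \<inter> {L. d {L}}"
  define Sq where "Sq = Bq \<inter> {L. d {L}}"
  note edges = is_tree_edgeD[OF assms(1)]
  have finT: "finite T" using is_tree_finite assms(1,2) .
  have "(Bp \<union> Bq) \<inter> {L. d {L}} = S \<union> Sq" unfolding S_def Sq_def by blast
  moreover have "card (S \<union> Sq) = card S + card Sq"
    using assms(2-4) unfolding S_def Sq_def by (intro card_Un_disjoint) auto
  ultimately have singletons: "(\<Sum>L\<in>Bp \<union> Bq. of_bool (d {L})) = real (card S) + real (card Sq)"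
    using assms(2,3) by simp
  have "(\<Sum>E\<in>T. of_bool (d E)) \<le> (\<Sum>E\<in>T. of_bool (E \<subseteq> S) :: real)"
  proof (rule sum_mono)
    fix E assume "E \<in> T"
    show "of_bool (d E) \<le> (of_bool (E \<subseteq> S) :: real)"
    proof (cases "d E")
      case True
      have "E \<subseteq> Bp" using edges[OF \<open>E \<in> T\<close>] by blast
      then have "E \<subseteq> S" using edge_mono[OF \<open>E \<in> T\<close> True] unfolding S_def by blast
      then show ?thesis by simp
    qed simp
  qed
  also have "\<dots> = real (card {E\<in>T. E \<subseteq> S})"
    using finT by (simp add: Int_def)
  finally have "contrast (\<lambda>E. of_bool (d E)) (Bp \<union> Bq) T
      \<le> of_bool (d {}) - real (card S) - real (card Sq) + real (card {E\<in>T. E \<subseteq> S})"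
    using singletons unfolding contrast_def by linarith
  note bound = this[THEN less_le_trans[OF pos]]
  have "S = {}"
  proof (rule ccontr)
    assume "S \<noteq> {}"
    moreover have "S \<subseteq> Bp" unfolding S_def by blast
    ultimately have "card {E\<in>T. E \<subseteq> S} < card S"
      by (rule tree_card_edges_within_less[OF assms(1,2), rotated])
    then have "real (card {E\<in>T. E \<subseteq> S}) + 1 \<le> real (card S)"
      by (simp only: nat_less_real_le)
    moreover have "of_bool (d {}) \<le> (1::real)" by simp
    ultimately show False using bound by linarith
  qed
  then have "real (card S) = 0" "real (card {E\<in>T. E \<subseteq> S}) = 0"
    using edges by fastforce+
  then have "0 < of_bool (d {}) - real (card Sq)" using bound by linarith
  then have "d {} \<and> Sq = {}" using assms(3) unfolding Sq_def by (cases "d {}") auto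
  with \<open>S = {}\<close> show ?thesis unfolding S_def Sq_def by blast
qed

definition lit_assignment :: "'v set \<Rightarrow> 'v lit set \<Rightarrow> 'v lit set \<Rightarrow> 'v \<Rightarrow> bool" where
  "lit_assignment C1 B E = (\<lambda>X. X \<in> C1 \<and> (Pos X \<in> B - E \<or> Neg X \<in> E))"

lemma lits_cover_vars:
  assumes "finite C1" "B \<subseteq> Lits C1" "consistent_lits B" "card B = card C1" "X \<in> C1"
  shows "Pos X \<in> B \<or> Neg X \<in> B"
proof -
  have "inj_on var B"
  proof (rule inj_onI)
    fix L L' assume "L \<in> B" "L' \<in> B" "var L = var L'"
    then show "L = L'" using assms(3) unfolding consistent_lits_def
      by (cases L; cases L') auto
  qed
  moreover have "var ` B \<subseteq> C1" using assms(2) unfolding Lits_def by auto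
  ultimately have "var ` B = C1"
    using card_subset_eq[OF assms(1)] card_image assms(4) by metis
  then obtain L where "L \<in> B" "var L = X" using assms(5) by blast
  then show ?thesis by (cases L) auto
qed

lemma lit_assignment_in_assignments: "C1 \<subseteq> C \<Longrightarrow> lit_assignment C1 B E \<in> assignments C"
  unfolding lit_assignment_def assignments_def by auto

lemma lval_lit_assignment:
  assumes "B \<subseteq> Lits C1" "consistent_lits B" "L \<in> B" "E \<subseteq> B"
  shows "lval L (lit_assignment C1 B E) = (L \<notin> E)"
  using assms unfolding lit_assignment_def consistent_lits_def Lits_def
  by (cases L) auto

lemma eq_lit_assignment_on_vars:
  assumes "consistent_lits B" "Pos X \<in> B \<or> Neg X \<in> B" "X \<in> C1" "E \<subseteq> B"
    and "\<forall>L\<in>B. lval L c = (L \<notin> E)"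
  shows "c X = lit_assignment C1 B E X"
proof (cases "Pos X \<in> B")
  case True
  then have "Neg X \<notin> B" using assms(1) unfolding consistent_lits_def by blast
  then show ?thesis using True assms(3-5) unfolding lit_assignment_def by auto
next
  case False
  then show ?thesis using assms(2-5) unfolding lit_assignment_def by force
qed

lemma cond_event_eq_obs_asg:
  assumes "B \<subseteq> Lits C1" "consistent_lits B" "\<forall>X\<in>C1. Pos X \<in> B \<or> Neg X \<in> B"
    "E \<subseteq> B" "C1 \<inter> C2 = {}"
  shows "cond_event val B E C2 W w
       = {\<omega>. obs_asg (C1 \<union> C2) val \<omega> = lit_assignment C1 B E \<and> W \<omega> = w}"
proof (intro set_eqI iffI)
  fix \<omega> assume \<omega>: "\<omega> \<in> cond_event val B E C2 W w"
  then have "\<forall>L\<in>B. lval L (\<lambda>X. val X \<omega>) = (L \<notin> E)"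
    using assms(4) unfolding cond_event_def by blast
  then have "val X \<omega> = lit_assignment C1 B E X" if "X \<in> C1" for X
    using eq_lit_assignment_on_vars[OF assms(2) _ that assms(4)] assms(3) that by blast
  then show "\<omega> \<in> {\<omega>. obs_asg (C1 \<union> C2) val \<omega> = lit_assignment C1 B E \<and> W \<omega> = w}"
    using \<omega> assms(5) unfolding cond_event_def obs_asg_def lit_assignment_def by auto
next
  fix \<omega> assume "\<omega> \<in> {\<omega>. obs_asg (C1 \<union> C2) val \<omega> = lit_assignment C1 B E \<and> W \<omega> = w}"
  then have obs: "obs_asg (C1 \<union> C2) val \<omega> = lit_assignment C1 B E" and "W \<omega> = w" by auto
  have "lval L (\<lambda>X. val X \<omega>) = (L \<notin> E)" if "L \<in> B" for L
  proof -
    have "var L \<in> C1" using that assms(1) unfolding Lits_def by auto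
    then have "val (var L) \<omega> = lit_assignment C1 B E (var L)"
      using fun_cong[OF obs, of "var L"] unfolding obs_asg_def by simp
    then have "lval L (\<lambda>X. val X \<omega>) = lval L (lit_assignment C1 B E)" by (cases L) auto
    then show ?thesis using lval_lit_assignment[OF assms(1,2) that assms(4)] by simp
  qed
  moreover have "\<not> val X \<omega>" if "X \<in> C2" for X
    using fun_cong[OF obs, of X] that assms(5) unfolding obs_asg_def lit_assignment_def by auto
  ultimately show "\<omega> \<in> cond_event val B E C2 W w"
    using \<open>W \<omega> = w\<close> assms(4) unfolding cond_event_def by auto
qed

lemma pos_monotonic_lit_assignment:
  assumes "pos_monotonic C Dpo L" "C1 \<subseteq> C" "B \<subseteq> Lits C1" "consistent_lits B"
    "L \<in> B" "E \<subseteq> B" "L \<notin> E" "Dpo (lit_assignment C1 B (insert L E)) \<omega>"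
  shows "Dpo (lit_assignment C1 B E) \<omega>"
proof -
  have "lval L (lit_assignment C1 B E)" "\<not> lval L (lit_assignment C1 B (insert L E))"
    using lval_lit_assignment[OF assms(3,4,5)] assms(5-7) by auto
  moreover have "\<forall>Y. Y \<noteq> var L \<longrightarrow> lit_assignment C1 B E Y = lit_assignment C1 B (insert L E) Y"
    unfolding lit_assignment_def by (metis Diff_iff insert_iff var.simps)
  ultimately show ?thesis
    using assms(1,8) lit_assignment_in_assignments[OF assms(2)] unfolding pos_monotonic_def by blast
qed

lemma pos_monotonic_set_true:
  assumes "\<forall>X\<in>A. pos_monotonic C Dpo (Pos X)" "finite A" "A \<subseteq> C"
    "c \<in> assignments C" "Dpo c \<omega>"
  shows "Dpo (\<lambda>X. c X \<or> X \<in> A) \<omega>"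
  using assms(2,1,3)
proof (induction A rule: finite_induct)
  case (insert X A)
  let ?c = "\<lambda>Y. c Y \<or> Y \<in> A" and ?c' = "\<lambda>Y. c Y \<or> Y \<in> insert X A"
  have IH: "Dpo ?c \<omega>" using insert by simp
  show ?case
  proof (cases "c X")
    case True
    then have "?c' = ?c" by auto
    with IH show ?thesis by simp
  next
    case False
    then have "\<not> lval (Pos X) ?c" "lval (Pos X) ?c'" using insert.hyps(2) by auto
    moreover have "?c \<in> assignments C" "?c' \<in> assignments C"
      using assms(4) insert.prems(2) unfolding assignments_def by auto
    moreover have "\<forall>Y. Y \<noteq> var (Pos X) \<longrightarrow> ?c' Y = ?c Y" by auto
    moreover have "pos_monotonic C Dpo (Pos X)" using insert.prems(1) by simp
    ultimately show ?thesis using IH unfolding pos_monotonic_def by blast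
  qed
qed (use assms(5) in simp)

lemma lit_assignment_tree_mono:
  assumes "\<forall>L\<in>Bp. pos_monotonic C Dpo L" "is_tree Bp T" "Bp \<subseteq> B" "C1 \<subseteq> C"
    "B \<subseteq> Lits C1" "consistent_lits B"
    "E \<in> T" "Dpo (lit_assignment C1 B E) \<omega>" "a \<in> E"
  shows "Dpo (lit_assignment C1 B {a}) \<omega>"
proof -
  obtain x y where "x \<in> Bp" "y \<in> Bp" "x \<noteq> y" "E = {x, y}"
    using is_tree_edgeD[OF assms(2,7)] by blast
  then obtain b where b: "b \<in> Bp" "b \<noteq> a" "E = insert b {a}" "a \<in> Bp"
    using assms(9) by auto
  show ?thesis
    using pos_monotonic_lit_assignment[OF _ assms(4-6), of Dpo b "{a}" \<omega>] assms(1,3,8) b by auto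
qed

lemma sufficient_cause_lit_assignment:
  assumes "finite C2" "C1 \<inter> C2 = {}"
    "B \<subseteq> Lits C1" "consistent_lits B" "\<forall>X\<in>C1. Pos X \<in> B \<or> Neg X \<in> B"
    "\<forall>X\<in>C2. pos_monotonic (C1 \<union> C2) Dpo (Pos X)"
    and suff: "Dpo (lit_assignment C1 B {}) \<omega>"
  shows "sufficient_cause (C1 \<union> C2) Dpo B \<omega>"
  unfolding sufficient_cause_def
proof (intro conjI ballI impI)
  let ?c0 = "lit_assignment C1 B {}"
  have c0: "?c0 \<in> assignments (C1 \<union> C2)" by (rule lit_assignment_in_assignments) simp
  moreover have "\<forall>L\<in>B. lval L ?c0" using lval_lit_assignment[OF assms(3,4)] by simp
  ultimately show "\<exists>c\<in>assignments (C1 \<union> C2). \<forall>L\<in>B. lval L c" by blast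
  fix c assume c: "c \<in> assignments (C1 \<union> C2)" "\<forall>L\<in>B. lval L c"
  have "c = (\<lambda>X. ?c0 X \<or> X \<in> {X\<in>C2. c X})"
  proof (rule ext)
    fix X
    show "c X = (?c0 X \<or> X \<in> {X\<in>C2. c X})"
    proof (cases "X \<in> C1")
      case True
      then have "c X = ?c0 X"
        using eq_lit_assignment_on_vars[OF assms(4) _ True empty_subsetI] assms(5) c(2) by simp
      moreover have "X \<notin> C2" using True assms(2) by blast
      ultimately show ?thesis by simp
    next
      case False
      then show ?thesis using c(1) unfolding assignments_def lit_assignment_def by auto
    qed
  qed
  moreover have "Dpo (\<lambda>X. ?c0 X \<or> X \<in> {X\<in>C2. c X}) \<omega>"
  proof -
    have "\<forall>X\<in>{X\<in>C2. c X}. pos_monotonic (C1 \<union> C2) Dpo (Pos X)" using assms(6) by blast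
    moreover have "finite {X\<in>C2. c X}" "{X\<in>C2. c X} \<subseteq> C1 \<union> C2" using assms(1) by auto
    ultimately show ?thesis
      by (rule pos_monotonic_set_true[where Dpo = Dpo and \<omega> = \<omega>, OF _ _ _ c0 suff])
  qed
  ultimately show "Dpo c \<omega>" by (simp only:)
qed

lemma not_sufficient_cause_proper_subset:
  assumes "B \<subseteq> Lits C1" "consistent_lits B" "C1 \<subseteq> C"
    and min: "\<forall>L\<in>B. \<not> Dpo (lit_assignment C1 B {L}) \<omega>"
    and "B0 \<subset> B"
  shows "\<not> sufficient_cause C Dpo B0 \<omega>"
proof
  assume sc: "sufficient_cause C Dpo B0 \<omega>"
  obtain L where "L \<in> B" "L \<notin> B0" using \<open>B0 \<subset> B\<close> by blast
  have "lval L' (lit_assignment C1 B {L})" if "L' \<in> B0" for L'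
  proof -
    have "L' \<in> B" "L' \<noteq> L" using that \<open>B0 \<subset> B\<close> \<open>L \<notin> B0\<close> by auto
    then show ?thesis using lval_lit_assignment[OF assms(1,2) \<open>L' \<in> B\<close>, of "{L}"] \<open>L \<in> B\<close> by simp
  qed
  then have "Dpo (lit_assignment C1 B {L}) \<omega>"
    using sc lit_assignment_in_assignments[OF assms(3)] unfolding sufficient_cause_def by blast
  then show False using min \<open>L \<in> B\<close> by blast
qed

lemma minimal_sufficient_cause_of_contrast_pos:
  assumes "finite C2" "C1 \<inter> C2 = {}" "Bp \<inter> Bq = {}" "finite (Bp \<union> Bq)"
    "Bp \<union> Bq \<subseteq> Lits C1" "consistent_lits (Bp \<union> Bq)" "\<forall>X\<in>C1. Pos X \<in> Bp \<union> Bq \<or> Neg X \<in> Bp \<union> Bq"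
    "\<forall>L \<in> Bp. pos_monotonic (C1 \<union> C2) Dpo L" "\<forall>X \<in> C2. pos_monotonic (C1 \<union> C2) Dpo (Pos X)"
    "is_tree Bp T"
    and pos: "0 < contrast (\<lambda>E. of_bool (Dpo (lit_assignment C1 (Bp \<union> Bq) E) \<omega>)) (Bp \<union> Bq) T"
  shows "minimal_sufficient_cause (C1 \<union> C2) Dpo (Bp \<union> Bq) \<omega>"
proof -
  have "Dpo (lit_assignment C1 (Bp \<union> Bq) {a}) \<omega>"
    if "E \<in> T" "Dpo (lit_assignment C1 (Bp \<union> Bq) E) \<omega>" "a \<in> E" for E a
    by (rule lit_assignment_tree_mono[OF assms(8,10) Un_upper1 Un_upper1 assms(5,6) that])
  then have "Dpo (lit_assignment C1 (Bp \<union> Bq) {}) \<omega>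
      \<and> (\<forall>L\<in>Bp \<union> Bq. \<not> Dpo (lit_assignment C1 (Bp \<union> Bq) {L}) \<omega>)"
    using assms(4) pos
    by (intro contrast_of_bool_pos_on_tree[OF assms(10) _ _ assms(3),
          where d = "\<lambda>E. Dpo (lit_assignment C1 (Bp \<union> Bq) E) \<omega>"]) auto
  then show ?thesis
    unfolding minimal_sufficient_cause_def
    using sufficient_cause_lit_assignment[OF assms(1,2,5-7,9)]
      not_sufficient_cause_proper_subset[OF assms(5,6) Un_upper1, where Dpo = Dpo and \<omega> = \<omega>]
    by blast
qed

lemma exists_contrast_potential_outcomes_pos:
  assumes "suff_adjust p (C1 \<union> C2) val W Dpo"
    and consistency: "\<forall>\<omega>. D \<omega> = Dpo (obs_asg (C1 \<union> C2) val \<omega>) \<omega>"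
    and "C1 \<inter> C2 = {}" "B \<subseteq> Lits C1" "consistent_lits B" "\<forall>X\<in>C1. Pos X \<in> B \<or> Neg X \<in> B"
    and "finite B" "finite T" "\<forall>E\<in>T. E \<subseteq> B"
    and "0 < measure_pmf.prob p (cond_event val B {} C2 W w)"
    and "\<forall>L \<in> B. 0 < measure_pmf.prob p (cond_event val B {L} C2 W w)"
    and "\<forall>E \<in> T. 0 < measure_pmf.prob p (cond_event val B E C2 W w)"
    and "0 < contrast (\<lambda>E. cexp p D (cond_event val B E C2 W w)) B T"
  shows "\<exists>\<omega>\<in>set_pmf p. 0 < contrast (\<lambda>E. of_bool (Dpo (lit_assignment C1 B E) \<omega>)) B T"
proof -
  define c where "c E = lit_assignment C1 B E" for E
  define PW where "PW = measure_pmf.prob p {\<omega>. W \<omega> = w}"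
  have adjusted: "cexp p D (cond_event val B E C2 W w)
      = measure_pmf.prob p {\<omega>. Dpo (c E) \<omega> \<and> W \<omega> = w} * inverse PW"
    if "E \<subseteq> B" "0 < measure_pmf.prob p (cond_event val B E C2 W w)" for E
  proof -
    have "c E \<in> assignments (C1 \<union> C2)"
      unfolding c_def by (rule lit_assignment_in_assignments) simp
    moreover have "cond_event val B E C2 W w = {\<omega>. obs_asg (C1 \<union> C2) val \<omega> = c E \<and> W \<omega> = w}"
      unfolding c_def by (rule cond_event_eq_obs_asg[OF assms(4-6) that(1) assms(3)])
    ultimately show ?thesis
      using cexp_adjustment[OF assms(1) _ consistency] that(2) unfolding PW_def divide_inverse by simp
  qed
  have "contrast (\<lambda>E. cexp p D (cond_event val B E C2 W w)) B T
      = contrast (\<lambda>E. measure_pmf.prob p {\<omega>. Dpo (c E) \<omega> \<and> W \<omega> = w}) B T * inverse PW"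
    unfolding contrast_mult_right[symmetric]
    by (rule contrast_cong) (use adjusted assms(9-12) in auto)
  then have "0 < contrast (\<lambda>E. measure_pmf.prob p {\<omega>. Dpo (c E) \<omega> \<and> W \<omega> = w}) B T"
    using assms(13) measure_nonneg[of "measure_pmf p" "{\<omega>. W \<omega> = w}"]
    unfolding PW_def by (auto simp: zero_less_mult_iff)
  then obtain \<omega> where "\<omega> \<in> set_pmf p"
    and "0 < contrast (\<lambda>E. of_bool (Dpo (c E) \<omega>)) B T * of_bool (W \<omega> = w)"
    unfolding contrast_prob_eq_expectation[OF assms(7,8)] contrast_mult_right[symmetric]
    by (elim measure_pmf_expectation_pos_imp) (simp add: indicator_def of_bool_conj)
  then show ?thesis unfolding c_def by (cases "W \<omega> = w") auto
qed

theorem mainTheorem11: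
  fixes p :: "'o pmf"
    and val :: "'v \<Rightarrow> 'o \<Rightarrow> bool"
    and D :: "'o \<Rightarrow> bool"
    and Dpo :: "('v \<Rightarrow> bool) \<Rightarrow> 'o \<Rightarrow> bool"
    and W :: "'o \<Rightarrow> 'w"
    and C1 C2 :: "'v set"
    and Bp Bq :: "'v lit set"
    and T :: "'v lit set set"
    and w :: 'w
  assumes "finite C1" and "finite C2" and "C1 \<inter> C2 = {}"
    and "Bp \<inter> Bq = {}" and "Bp \<union> Bq \<subseteq> Lits C1" and "consistent_lits (Bp \<union> Bq)"
    and "card (Bp \<union> Bq) = card C1"
    and consistency: "\<forall>\<omega>. D \<omega> = Dpo (obs_asg (C1 \<union> C2) val \<omega>) \<omega>"
    and "\<forall>L \<in> Bp. pos_monotonic (C1 \<union> C2) Dpo L"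
    and "\<forall>X \<in> C2. pos_monotonic (C1 \<union> C2) Dpo (Pos X)"
    and "suff_adjust p (C1 \<union> C2) val W Dpo"
    and "is_tree Bp T"
    and "measure_pmf.prob p (cond_event val (Bp \<union> Bq) {} C2 W w) > 0"
    and "\<forall>L \<in> Bp \<union> Bq. measure_pmf.prob p (cond_event val (Bp \<union> Bq) {L} C2 W w) > 0"
    and "\<forall>E \<in> T. measure_pmf.prob p (cond_event val (Bp \<union> Bq) E C2 W w) > 0"
    and "cexp p D (cond_event val (Bp \<union> Bq) {} C2 W w)
         - (\<Sum>L \<in> Bp \<union> Bq. cexp p D (cond_event val (Bp \<union> Bq) {L} C2 W w))
         + (\<Sum>E \<in> T. cexp p D (cond_event val (Bp \<union> Bq) E C2 W w)) > 0"
  shows "\<exists>\<omega> \<in> set_pmf p. minimal_sufficient_cause (C1 \<union> C2) Dpo (Bp \<union> Bq) \<omega>"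
proof -
  define B where "B = Bp \<union> Bq"
  have BL: "B \<subseteq> Lits C1" and cons: "consistent_lits B"
    and cover: "\<forall>X\<in>C1. Pos X \<in> B \<or> Neg X \<in> B"
    using lits_cover_vars[OF assms(1,5-7)] assms(5,6) unfolding B_def by blast+
  have finB: "finite B"
    using BL assms(1) unfolding Lits_def by (meson finite_Un finite_imageI finite_subset)
  have "\<forall>E\<in>T. E \<subseteq> B" and finT: "finite T"
    using is_tree_edgeD[OF assms(12)] is_tree_finite[OF assms(12)] finB unfolding B_def by auto
  moreover have "0 < contrast (\<lambda>E. cexp p D (cond_event val B E C2 W w)) B T"
    using assms(16) by (simp add: contrast_def B_def)
  ultimately obtain \<omega> where "\<omega> \<in> set_pmf p"
    and "0 < contrast (\<lambda>E. of_bool (Dpo (lit_assignment C1 B E) \<omega>)) B T"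
    using exists_contrast_potential_outcomes_pos[OF assms(11) consistency assms(3) BL cons cover finB]
      assms(13-15) unfolding B_def by blast
  then show ?thesis
    using minimal_sufficient_cause_of_contrast_pos[OF assms(2-4) _ _ _ _ assms(9,10,12)]
      BL cons cover finB unfolding B_def by blast
qed

end
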